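(* Let $S$ be a finite set of agents, $p>0$ a price, $k\ge 0$ an amount of a divisible good and $z\in[0,1]$. Then the expected revenue of $\mathrm{Sell\_Modif}(S,p,k,z)$ is at least $z$ times the revenue of $\mathrm{Sell\_Div}(S,p,k)$ (the expectations being over all internal randomness of the procedures, including the random partition and the random permutations).
   Context: Each agent $i$ has value $v_i\ge0$ and budget $b_i\ge0$. $\mathrm{Div\_Alloc}(S,p,k)$: set $k'\gets k$, $x_i\gets 0$; draw a uniformly random permutation $\pi$ of $S$; for $t=1,\dots,|S|$, if $v_{\pi(t)}\ge p$ set $x_{\pi(t)}\gets\min\{b_{\pi(t)}/p,k'\}$ and $k'\gets k'-x_{\pi(t)}$; return $x$. $\mathrm{Sell\_Div}(S,p,k)$: let $x=\mathrm{Div\_Alloc}(S,p,k)$ and give each $i\in S$ the amount $x_i$ at payment $x_i p$; its revenue is $p\sum_{i\in S}x_i$. $\mathrm{Sell\_Modif}(S,p,k,z)$: set $m\gets k$; independently place each $i\in S$ into $S_1$ with probability $z$ and into $S_2$ otherwise; then for each $i\in S_1$ in an arbitrary order: let $x'$ be the allocation returned by a fresh independent run of $\mathrm{Div\_Alloc}(S_2\cup\{i\},p,k)$, set $x_i\gets\min\{x'_i,m\}$, give agent $i$ amount $x_i$ at payment $x_i p$, and update $m\gets m-x_i$. Its revenue is $p\sum_{i\in S_1}x_i$. *)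

theory Defs
  imports "HOL-Probability.Probability" "HOL-Combinatorics.Multiset_Permutations"
begin

fun div_alloc_list :: "('a \<Rightarrow> real) \<Rightarrow> ('a \<Rightarrow> real) \<Rightarrow> real \<Rightarrow> real \<Rightarrow> 'a list \<Rightarrow> ('a \<Rightarrow> real)" where
  "div_alloc_list v b p kr [] = (\<lambda>_. 0)"
| "div_alloc_list v b p kr (i # is) =
     (if v i \<ge> p then
        (let xi = min (b i / p) kr in (div_alloc_list v b p (kr - xi) is)(i := xi))
      else div_alloc_list v b p kr is)"

definition Div_Alloc :: "('a \<Rightarrow> real) \<Rightarrow> ('a \<Rightarrow> real) \<Rightarrow> 'a set \<Rightarrow> real \<Rightarrow> real \<Rightarrow> ('a \<Rightarrow> real) pmf" where
  "Div_Alloc v b S p k = map_pmf (div_alloc_list v b p k) (pmf_of_set (permutations_of_set S))"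

definition Sell_Div_rev :: "('a \<Rightarrow> real) \<Rightarrow> ('a \<Rightarrow> real) \<Rightarrow> 'a set \<Rightarrow> real \<Rightarrow> real \<Rightarrow> real pmf" where
  "Sell_Div_rev v b S p k = map_pmf (\<lambda>x. p * (\<Sum>i\<in>S. x i)) (Div_Alloc v b S p k)"

text \<open>Second phase of Sell_Modif: process the agents of S1 (given as a list, in order)
  with remaining supply m; each step uses a fresh independent run of
  Div_Alloc(S2 \<union> {i}, p, k).\<close>
fun modif_run :: "('a \<Rightarrow> real) \<Rightarrow> ('a \<Rightarrow> real) \<Rightarrow> real \<Rightarrow> real \<Rightarrow> 'a set \<Rightarrow> real \<Rightarrow> 'a list \<Rightarrow> real pmf" where
  "modif_run v b p k S2 m [] = return_pmf 0"
| "modif_run v b p k S2 m (i # is) =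
     Div_Alloc v b (insert i S2) p k \<bind> (\<lambda>x'.
       (let xi = min (x' i) m in
         map_pmf (\<lambda>r. p * xi + r) (modif_run v b p k S2 (m - xi) is)))"

text \<open>Revenue distribution of Sell_Modif(S,p,k,z); ord T gives the (arbitrary) order
  in which the agents of the realized set S1 = T are processed.\<close>
definition Sell_Modif_rev :: "('a \<Rightarrow> real) \<Rightarrow> ('a \<Rightarrow> real) \<Rightarrow> ('a set \<Rightarrow> 'a list) \<Rightarrow> 'a set \<Rightarrow> real \<Rightarrow> real \<Rightarrow> real \<Rightarrow> real pmf" where
  "Sell_Modif_rev v b ord S p k z =
     Pi_pmf S False (\<lambda>_. bernoulli_pmf z) \<bind> (\<lambda>f.
       (let S1 = {i \<in> S. f i}; S2 = {i \<in> S. \<not> f i} in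
         modif_run v b p k S2 k (ord S1)))"

end

theory Submission
  imports Defs
begin

text \<open>Along an order, Div_Alloc gives agent \<open>i\<close> the amount \<open>min (d i) (max 0 (k - D))\<close>, where
  \<open>d\<close> is the demand \<open>b/p\<close> of the agents with value at least \<open>p\<close> and \<open>D\<close> the total demand
  of the agents before \<open>i\<close>; this share is antitone in \<open>D\<close>. Fix the random partition \<open>(S1, S2)\<close>.
  The core inequality: for a submodular objective such as \<open>min m\<close>, evaluating the shares of
  two groups \<open>G1, G2\<close> of weightless agents on one uniformly random order of \<open>G1 \<union> G2 \<union> U\<close>
  yields at most its value on two independent orders of \<open>G1 \<union> U\<close> and \<open>G2 \<union> U\<close>. It is proved by
  induction, conditioning on the first element; the exchange inequalities between first
  elements come from a transposition coupling. Applied agent by agent to \<open>S1\<close> (with \<open>U = S2\<close>),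
  it shows that the expected revenue of Sell_Modif is at least what \<open>S1\<close> would collect in one
  run of Div_Alloc on \<open>S\<close> in which only \<open>S2\<close> consumes supply before them, and this dominates
  what \<open>S1\<close> collects in Sell_Div. Each agent lies in \<open>S1\<close> with probability \<open>z\<close>.\<close>

section \<open>Averages over permutations\<close>

definition perm_avg :: "'a set \<Rightarrow> ('a list \<Rightarrow> real) \<Rightarrow> real" where
  "perm_avg A h = (\<Sum>\<pi>\<in>permutations_of_set A. h \<pi>) / real (card (permutations_of_set A))"

lemma perm_avg_first:
  assumes "finite A" "A \<noteq> {}"
  shows "perm_avg A h = (\<Sum>x\<in>A. perm_avg (A - {x}) (\<lambda>\<pi>. h (x # \<pi>))) / real (card A)"
proof -
  have "(\<Sum>\<pi>\<in>permutations_of_set A. h \<pi>) =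
        (\<Sum>x\<in>A. \<Sum>\<pi>\<in>(#) x ` permutations_of_set (A - {x}). h \<pi>)"
    unfolding permutations_of_set_nonempty[OF assms(2)]
    by (rule sum.UNION_disjoint) (use assms in auto)
  also have "\<dots> = (\<Sum>x\<in>A. \<Sum>\<pi>\<in>permutations_of_set (A - {x}). h (x # \<pi>))"
    by (rule sum.cong[OF refl], subst sum.reindex) (auto simp: inj_on_def)
  finally have split: "(\<Sum>\<pi>\<in>permutations_of_set A. h \<pi>) = \<dots>" .
  have "card A > 0" using assms by (simp add: card_gt_0_iff)
  then have "fact (card A) = real (card A) * fact (card A - 1)"
    by (metis fact_reduce of_nat_fact)
  then show ?thesis
    unfolding perm_avg_def split using assms
    by (simp add: sum_divide_distrib[symmetric] field_simps)
qed

lemma perm_avg_cong: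
  "(\<And>\<pi>. \<pi> \<in> permutations_of_set A \<Longrightarrow> h \<pi> = h' \<pi>) \<Longrightarrow> perm_avg A h = perm_avg A h'"
  unfolding perm_avg_def by (metis (no_types, lifting) sum.cong)

lemma perm_avg_mono:
  "(\<And>\<pi>. \<pi> \<in> permutations_of_set A \<Longrightarrow> h \<pi> \<le> h' \<pi>) \<Longrightarrow> perm_avg A h \<le> perm_avg A h'"
  unfolding perm_avg_def by (intro divide_right_mono sum_mono) auto

lemma perm_avg_const: "finite A \<Longrightarrow> perm_avg A (\<lambda>_. c) = c"
  by (simp add: perm_avg_def)

lemma perm_avg_add: "perm_avg A (\<lambda>\<pi>. h \<pi> + h' \<pi>) = perm_avg A h + perm_avg A h'"
  by (simp add: perm_avg_def sum.distrib add_divide_distrib)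

lemma perm_avg_add_const: "finite A \<Longrightarrow> perm_avg A (\<lambda>\<pi>. c + h \<pi>) = c + perm_avg A h"
  using perm_avg_add[of A "\<lambda>_. c" h] by (simp add: perm_avg_const)

lemma perm_avg_mult_left: "perm_avg A (\<lambda>\<pi>. c * h \<pi>) = c * perm_avg A h"
  by (simp add: perm_avg_def sum_distrib_left)

lemma perm_avg_sum: "perm_avg A (\<lambda>\<pi>. \<Sum>y\<in>Y. h y \<pi>) = (\<Sum>y\<in>Y. perm_avg A (h y))"
  by (simp add: perm_avg_def sum.swap[of _ Y] sum_divide_distrib)

lemma perm_avg_divide: "perm_avg A (\<lambda>\<pi>. h \<pi> / c) = perm_avg A h / c"
  by (simp add: perm_avg_def sum_divide_distrib mult.commute)

lemma perm_avg_reindex: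
  assumes "bij_betw \<phi> (permutations_of_set A) (permutations_of_set B)"
  shows "perm_avg B h = perm_avg A (\<lambda>\<pi>. h (\<phi> \<pi>))"
  unfolding perm_avg_def
  by (simp add: bij_betw_same_card[OF assms] sum.reindex_bij_betw[OF assms, symmetric])

lemma perm_avg_first_inner:
  assumes "finite B" "B \<noteq> {}"
  shows "perm_avg A (\<lambda>\<pi>. perm_avg B (h \<pi>))
       = (\<Sum>y\<in>B. perm_avg A (\<lambda>\<pi>. perm_avg (B - {y}) (\<lambda>\<rho>. h \<pi> (y # \<rho>)))) / real (card B)"
  by (subst perm_avg_first[OF assms]) (simp add: perm_avg_divide perm_avg_sum)

lemma expectation_pmf_of_set_permutations:
  "finite A \<Longrightarrow> measure_pmf.expectation (pmf_of_set (permutations_of_set A)) h = perm_avg A h"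
  by (simp add: integral_pmf_of_set perm_avg_def)

lemma bij_betw_map_transpose_permutations:
  assumes "x \<in> V" "x' \<in> V"
  shows "bij_betw (map (Transposition.transpose x x'))
           (permutations_of_set (V - {x})) (permutations_of_set (V - {x'}))"
proof -
  let ?t = "Transposition.transpose x x'"
  have "?t ` (V - {x}) = V - {x'}"
    using assms by (auto simp: Transposition.transpose_def image_iff)
  moreover have "permutations_of_set (?t ` (V - {x})) = map ?t ` permutations_of_set (V - {x})"
    by (rule permutations_of_set_image_inj) simp
  moreover have "inj_on (map ?t) (permutations_of_set (V - {x}))"
    by (rule inj_on_subset[OF inj_mapI[OF inj_transpose]]) simp
  ultimately show ?thesis by (simp add: bij_betw_def)
qed

section \<open>Submodular objectives\<close>

text \<open>Submodularity of \<open>(a, b) \<mapsto> f (a + b)\<close> on \<open>\<real>\<^sup>2\<close>; it holds for every concave \<open>f\<close>.\<close>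

definition submodular_sum :: "(real \<Rightarrow> real) \<Rightarrow> bool" where
  "submodular_sum f \<longleftrightarrow>
     (\<forall>a a' b b'. a' \<le> a \<longrightarrow> b' \<le> b \<longrightarrow> f (a + b) + f (a' + b') \<le> f (a + b') + f (a' + b))"

lemma submodular_sum_shift: "submodular_sum f \<Longrightarrow> submodular_sum (\<lambda>t. f (c + t))"
  unfolding submodular_sum_def
  by (metis (no_types, opaque_lifting) add.assoc add_le_cancel_left)

lemma submodular_sum_min: "submodular_sum (min m)"
  unfolding submodular_sum_def by (smt (verit, best))

lemma perm_avg_submodular_coupling:
  assumes f: "submodular_sum f"
    and \<phi>: "bij_betw \<phi> (permutations_of_set A) (permutations_of_set A')"
    and \<psi>: "bij_betw \<psi> (permutations_of_set B) (permutations_of_set B')"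
    and \<alpha>: "\<And>\<pi>. \<pi> \<in> permutations_of_set A \<Longrightarrow> \<alpha>' (\<phi> \<pi>) \<le> \<alpha> \<pi>"
    and \<beta>: "\<And>\<rho>. \<rho> \<in> permutations_of_set B \<Longrightarrow> \<beta>' (\<psi> \<rho>) \<le> \<beta> \<rho>"
  shows "perm_avg A (\<lambda>\<pi>. perm_avg B (\<lambda>\<rho>. f (\<alpha> \<pi> + \<beta> \<rho>)))
           + perm_avg A' (\<lambda>\<pi>. perm_avg B' (\<lambda>\<rho>. f (\<alpha>' \<pi> + \<beta>' \<rho>)))
       \<le> perm_avg A (\<lambda>\<pi>. perm_avg B' (\<lambda>\<rho>. f (\<alpha> \<pi> + \<beta>' \<rho>)))
           + perm_avg A' (\<lambda>\<pi>. perm_avg B (\<lambda>\<rho>. f (\<alpha>' \<pi> + \<beta> \<rho>)))"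
proof -
  have pointwise: "f (\<alpha> \<pi> + \<beta> \<rho>) + f (\<alpha>' (\<phi> \<pi>) + \<beta>' (\<psi> \<rho>))
                   \<le> f (\<alpha> \<pi> + \<beta>' (\<psi> \<rho>)) + f (\<alpha>' (\<phi> \<pi>) + \<beta> \<rho>)"
    if "\<pi> \<in> permutations_of_set A" "\<rho> \<in> permutations_of_set B" for \<pi> \<rho>
    using f \<alpha>[OF that(1)] \<beta>[OF that(2)] unfolding submodular_sum_def by blast
  have "perm_avg A (\<lambda>\<pi>. perm_avg B (\<lambda>\<rho>. f (\<alpha> \<pi> + \<beta> \<rho>) + f (\<alpha>' (\<phi> \<pi>) + \<beta>' (\<psi> \<rho>))))
      \<le> perm_avg A (\<lambda>\<pi>. perm_avg B (\<lambda>\<rho>. f (\<alpha> \<pi> + \<beta>' (\<psi> \<rho>)) + f (\<alpha>' (\<phi> \<pi>) + \<beta> \<rho>)))"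
    by (intro perm_avg_mono pointwise)
  then show ?thesis
    unfolding perm_avg_reindex[OF \<phi>] perm_avg_reindex[OF \<psi>] by (simp only: perm_avg_add)
qed

lemma sum_diagonal_le:
  fixes \<Psi> :: "'a \<Rightarrow> 'a \<Rightarrow> real"
  assumes "\<And>u u'. u \<in> U \<Longrightarrow> u' \<in> U \<Longrightarrow> \<Psi> u u + \<Psi> u' u' \<le> \<Psi> u u' + \<Psi> u' u"
  shows "card U * (\<Sum>u\<in>U. \<Psi> u u) \<le> (\<Sum>u\<in>U. \<Sum>u'\<in>U. \<Psi> u u')"
proof -
  have "2 * (card U * (\<Sum>u\<in>U. \<Psi> u u)) = (\<Sum>u\<in>U. \<Sum>u'\<in>U. \<Psi> u u + \<Psi> u' u')"
    by (simp add: sum.distrib sum_distrib_left)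
  also have "\<dots> \<le> (\<Sum>u\<in>U. \<Sum>u'\<in>U. \<Psi> u u' + \<Psi> u' u)"
    by (intro sum_mono assms)
  also have "\<dots> = 2 * (\<Sum>u\<in>U. \<Sum>u'\<in>U. \<Psi> u u')"
    by (simp add: sum.distrib sum.swap[of "\<lambda>u u'. \<Psi> u' u"])
  finally show ?thesis by simp
qed

lemma block_average_le:
  fixes t1 t2 n SGG SGU SUG SUU D :: real
  assumes pos: "t1 > 0" "t2 > 0" "n \<ge> 0"
    and mixed: "n * SGG + t1 * (t2 * D) \<le> t2 * SGU + t1 * SUG" and diag: "n * D \<le> SUU"
  shows "(SGG + SGU) / (t2 + n) + (SGG + SUG) / (t1 + n) + D
       \<le> (t1 + t2 + n) / ((t1 + n) * (t2 + n)) * (SGG + SGU + SUG + SUU)"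
proof -
  have numerator: "(t1 + n) * (SGG + SGU) + (t2 + n) * (SGG + SUG) + (t1 + n) * (t2 + n) * D
      \<le> (t1 + t2 + n) * (SGG + SGU + SUG + SUU)"
  proof -
    have "0 \<le> (t1 + t2 + n) * (SUU - n * D)" using diag pos by simp
    then show ?thesis using mixed by (simp add: algebra_simps)
  qed
  have "(SGG + SGU) / (t2 + n) + (SGG + SUG) / (t1 + n) + D
      = ((t1 + n) * (SGG + SGU) + (t2 + n) * (SGG + SUG) + (t1 + n) * (t2 + n) * D) / ((t1 + n) * (t2 + n))"
  proof -
    have "a / N2 + b / N1 + D = (N1 * a + N2 * b + N1 * N2 * D) / (N1 * N2)"
      if "N1 \<noteq> 0" "N2 \<noteq> 0" for a b N1 N2 :: real
      using that by (simp add: field_simps)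
    then show ?thesis using pos by simp
  qed
  also have "\<dots> \<le> (t1 + t2 + n) * (SGG + SGU + SUG + SUU) / ((t1 + n) * (t2 + n))"
    using numerator pos by (intro divide_right_mono) auto
  finally show ?thesis by simp
qed

text \<open>Here \<open>\<Psi> x y\<close> stands for an average over two independent orders of \<open>G1 \<union> U\<close> and
  \<open>G2 \<union> U\<close> that start with \<open>x\<close> and \<open>y\<close>; the left-hand side collects the bounds obtained
  by conditioning one common order of \<open>G1 \<union> G2 \<union> U\<close> on its first element.\<close>

lemma first_element_average_le:
  fixes \<Psi> :: "'a \<Rightarrow> 'a \<Rightarrow> real"
  assumes fin: "finite G1" "finite G2" "finite U"
    and disj: "G1 \<inter> G2 = {}" "G1 \<inter> U = {}" "G2 \<inter> U = {}"
    and ne: "G1 \<noteq> {}" "G2 \<noteq> {}"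
    and mixed: "\<And>e e' u. e \<in> G1 \<Longrightarrow> e' \<in> G2 \<Longrightarrow> u \<in> U \<Longrightarrow> \<Psi> e e' + \<Psi> u u \<le> \<Psi> e u + \<Psi> u e'"
    and diag: "\<And>u u'. u \<in> U \<Longrightarrow> u' \<in> U \<Longrightarrow> \<Psi> u u + \<Psi> u' u' \<le> \<Psi> u u' + \<Psi> u' u"
  shows "(\<Sum>x\<in>G1. (\<Sum>y\<in>G2 \<union> U. \<Psi> x y) / real (card (G2 \<union> U)))
           + (\<Sum>y\<in>G2. (\<Sum>x\<in>G1 \<union> U. \<Psi> x y) / real (card (G1 \<union> U))) + (\<Sum>u\<in>U. \<Psi> u u)
         \<le> real (card (G1 \<union> G2 \<union> U)) / (real (card (G1 \<union> U)) * real (card (G2 \<union> U)))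
             * (\<Sum>x\<in>G1 \<union> U. \<Sum>y\<in>G2 \<union> U. \<Psi> x y)"
proof -
  define t1 where "t1 = real (card G1)"
  define t2 where "t2 = real (card G2)"
  define n where "n = real (card U)"
  define SGG where "SGG = (\<Sum>e\<in>G1. \<Sum>e'\<in>G2. \<Psi> e e')"
  define SGU where "SGU = (\<Sum>e\<in>G1. \<Sum>u\<in>U. \<Psi> e u)"
  define SUG where "SUG = (\<Sum>u\<in>U. \<Sum>e'\<in>G2. \<Psi> u e')"
  define SUU where "SUU = (\<Sum>u\<in>U. \<Sum>u'\<in>U. \<Psi> u u')"
  define D where "D = (\<Sum>u\<in>U. \<Psi> u u)"
  have cards: "card (G1 \<union> U) = t1 + n" "card (G2 \<union> U) = t2 + n" "card (G1 \<union> G2 \<union> U) = t1 + t2 + n"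
    unfolding t1_def t2_def n_def using fin disj by (simp_all add: card_Un_disjoint Int_Un_distrib2)
  have pos: "t1 > 0" "t2 > 0" "n \<ge> 0"
    unfolding t1_def t2_def n_def using fin ne by (simp_all add: card_gt_0_iff)
  have mixed_sum: "n * SGG + t1 * (t2 * D) \<le> t2 * SGU + t1 * SUG"
  proof -
    have "n * SGG + t1 * (t2 * D) = (\<Sum>e\<in>G1. \<Sum>e'\<in>G2. \<Sum>u\<in>U. \<Psi> e e' + \<Psi> u u)"
      unfolding SGG_def D_def n_def t1_def t2_def by (simp add: sum.distrib sum_distrib_left)
    also have "\<dots> \<le> (\<Sum>e\<in>G1. \<Sum>e'\<in>G2. \<Sum>u\<in>U. \<Psi> e u + \<Psi> u e')"
      by (intro sum_mono mixed)
    also have "\<dots> = t2 * SGU + t1 * SUG"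
      unfolding SGU_def SUG_def t1_def t2_def
      by (simp add: sum.distrib sum_distrib_left sum.swap[of _ G2 U])
    finally show ?thesis .
  qed
  have diag_sum: "n * D \<le> SUU"
    unfolding n_def D_def SUU_def using diag by (rule sum_diagonal_le)
  have row_sums: "(\<Sum>x\<in>G1. (\<Sum>y\<in>G2 \<union> U. \<Psi> x y) / real (card (G2 \<union> U))) = (SGG + SGU) / (t2 + n)"
    unfolding SGG_def SGU_def cards using fin disj
    by (simp add: sum.union_disjoint sum.distrib sum_divide_distrib[symmetric])
  have column_sums: "(\<Sum>y\<in>G2. (\<Sum>x\<in>G1 \<union> U. \<Psi> x y) / real (card (G1 \<union> U))) = (SGG + SUG) / (t1 + n)"
    unfolding SGG_def SUG_def cards using fin disj
    by (simp add: sum.swap[of _ G2] sum.union_disjoint sum.distrib sum_divide_distrib[symmetric])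
  have total: "(\<Sum>x\<in>G1 \<union> U. \<Sum>y\<in>G2 \<union> U. \<Psi> x y) = SGG + SGU + SUG + SUU"
    unfolding SGG_def SGU_def SUG_def SUU_def using fin disj
    by (simp add: sum.union_disjoint sum.distrib)
  show ?thesis
    using block_average_le[OF pos mixed_sum diag_sum] row_sums column_sums total cards
    by (simp add: D_def)
qed

fun weight_before :: "('a \<Rightarrow> real) \<Rightarrow> 'a list \<Rightarrow> 'a \<Rightarrow> real" where
  "weight_before w [] i = 0"
| "weight_before w (x # xs) i = (if x = i then 0 else w x + weight_before w xs i)"

lemma weight_before_nonneg: "(\<And>x. 0 \<le> w x) \<Longrightarrow> 0 \<le> weight_before w xs i"
  by (induction xs) auto

lemma weight_before_cong:
  "(\<And>x. x \<in> set \<pi> \<Longrightarrow> x \<noteq> i \<Longrightarrow> w x = w' x) \<Longrightarrow> weight_before w \<pi> i = weight_before w' \<pi> i"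
  by (induction \<pi>) auto

lemma weight_before_mono:
  "(\<And>x. w x \<le> w' x) \<Longrightarrow> weight_before w \<pi> i \<le> weight_before w' \<pi> i"
  by (induction \<pi>) (auto intro: add_mono)

section \<open>One common order versus two independent orders\<close>

text \<open>Agent \<open>i\<close>, preceded in an order by agents of total weight \<open>y\<close>, receives \<open>g i y\<close>;
  the offset \<open>s\<close> of \<open>total_share\<close> accounts for weight consumed earlier.\<close>

locale antitone_shares =
  fixes w :: "'a \<Rightarrow> real" and g :: "'a \<Rightarrow> real \<Rightarrow> real"
  assumes weight_nonneg: "0 \<le> w x"
    and share_antitone: "y \<le> y' \<Longrightarrow> g i y' \<le> g i y"
begin

definition total_share :: "real \<Rightarrow> 'a set \<Rightarrow> 'a list \<Rightarrow> real" where
  "total_share s G \<pi> = (\<Sum>i\<in>G. g i (s + weight_before w \<pi> i))"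

lemma total_share_empty [simp]: "total_share s {} \<pi> = 0"
  by (simp add: total_share_def)

lemma total_share_Cons_notin:
  "x \<notin> G \<Longrightarrow> total_share s G (x # \<pi>) = total_share (s + w x) G \<pi>"
  unfolding total_share_def by (intro sum.cong refl) (auto simp: add.assoc)

lemma total_share_Cons_weightless:
  assumes "finite G" "x \<in> G" "w x = 0"
  shows "total_share s G (x # \<pi>) = g x s + total_share s (G - {x}) \<pi>"
proof -
  have "total_share s G (x # \<pi>) = g x s + (\<Sum>i\<in>G - {x}. g i (s + weight_before w (x # \<pi>) i))"
    unfolding total_share_def using assms by (simp add: sum.remove)
  also have "(\<Sum>i\<in>G - {x}. g i (s + weight_before w (x # \<pi>) i)) = total_share s (G - {x}) \<pi>"
    unfolding total_share_def using assms by (intro sum.cong) auto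
  finally show ?thesis .
qed

lemma total_share_Un:
  "finite A \<Longrightarrow> finite B \<Longrightarrow> A \<inter> B = {} \<Longrightarrow> total_share s (A \<union> B) \<pi> = total_share s A \<pi> + total_share s B \<pi>"
  by (simp add: total_share_def sum.union_disjoint)

lemma weight_before_transpose_tail:
  assumes "w x \<le> w x'" "x \<notin> set \<pi>" "distinct \<pi>" "i \<noteq> x" "i \<noteq> x'"
  shows "weight_before w \<pi> i + (w x - w x') \<le> weight_before w (map (Transposition.transpose x x') \<pi>) i"
  using assms(2-)
proof (induction \<pi>)
  case Nil
  then show ?case using assms(1) by simp
next
  case (Cons y ys)
  consider "y = i" | "y = x'" "y \<noteq> i" | "y \<noteq> x'" "y \<noteq> i"
    by blast
  then show ?case
  proof cases
    case 1
    then show ?thesis using Cons.prems assms(1) by simp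
  next
    case 2
    have "map (Transposition.transpose x x') ys = ys"
      using Cons.prems 2 by (intro map_idI transpose_apply_other) auto
    then show ?thesis using 2 Cons.prems by simp
  next
    case 3
    then show ?thesis using Cons by auto
  qed
qed

lemma total_share_transpose_head:
  assumes "w x \<le> w x'" "x \<notin> set \<pi>" "distinct \<pi>" "x' \<notin> G" "x \<noteq> x'"
  shows "total_share s G (x' # map (Transposition.transpose x x') \<pi>) \<le> total_share s G (x # \<pi>)"
  unfolding total_share_def
proof (rule sum_mono)
  fix i assume "i \<in> G"
  then have "i \<noteq> x'" using assms by auto
  have "weight_before w (x # \<pi>) i \<le> weight_before w (x' # map (Transposition.transpose x x') \<pi>) i"
  proof (cases "i = x")
    case True
    then show ?thesis
      using \<open>i \<noteq> x'\<close> weight_before_nonneg[of w] weight_nonneg by (simp add: add_nonneg_nonneg)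
  next
    case False
    then show ?thesis
      using weight_before_transpose_tail[OF assms(1-3) False \<open>i \<noteq> x'\<close>] \<open>i \<noteq> x'\<close> assms(5) by simp
  qed
  then show "g i (s + weight_before w (x' # map (Transposition.transpose x x') \<pi>) i)
           \<le> g i (s + weight_before w (x # \<pi>) i)"
    by (intro share_antitone) simp
qed

lemma first_elements_submodular:
  fixes s :: real
  assumes f: "submodular_sum f"
    and mem: "x \<in> A" "x' \<in> A" "y \<in> B" "y' \<in> B" "x' \<notin> G1" "y' \<notin> G2"
    and heavier: "w x \<le> w x'" "w y \<le> w y'"
    and ne: "x \<noteq> x'" "y \<noteq> y'"
  defines "\<Psi> \<equiv> \<lambda>x y. perm_avg (A - {x}) (\<lambda>\<pi>. perm_avg (B - {y})
             (\<lambda>\<rho>. f (total_share s G1 (x # \<pi>) + total_share s G2 (y # \<rho>))))"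
  shows "\<Psi> x y + \<Psi> x' y' \<le> \<Psi> x y' + \<Psi> x' y"
  unfolding \<Psi>_def
proof (rule perm_avg_submodular_coupling[OF f bij_betw_map_transpose_permutations[OF mem(1,2)]
                                          bij_betw_map_transpose_permutations[OF mem(3,4)]])
  fix \<pi> assume "\<pi> \<in> permutations_of_set (A - {x})"
  then have "x \<notin> set \<pi>" "distinct \<pi>" by (auto simp: permutations_of_set_def)
  from total_share_transpose_head[OF heavier(1) this mem(5) ne(1)]
  show "total_share s G1 (x' # map (Transposition.transpose x x') \<pi>) \<le> total_share s G1 (x # \<pi>)" .
next
  fix \<rho> assume "\<rho> \<in> permutations_of_set (B - {y})"
  then have "y \<notin> set \<rho>" "distinct \<rho>" by (auto simp: permutations_of_set_def)
  from total_share_transpose_head[OF heavier(2) this mem(6) ne(2)]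
  show "total_share s G2 (y' # map (Transposition.transpose y y') \<rho>) \<le> total_share s G2 (y # \<rho>)" .
qed

lemma first_elements_exchange:
  fixes s :: real
  assumes f: "submodular_sum f" and disj: "G1 \<inter> U = {}" "G2 \<inter> U = {}"
    and weightless: "\<forall>x\<in>G1 \<union> G2. w x = 0"
  defines "\<Psi> \<equiv> \<lambda>x y. perm_avg (G1 \<union> U - {x}) (\<lambda>\<pi>. perm_avg (G2 \<union> U - {y})
             (\<lambda>\<rho>. f (total_share s G1 (x # \<pi>) + total_share s G2 (y # \<rho>))))"
  shows "e \<in> G1 \<Longrightarrow> e' \<in> G2 \<Longrightarrow> u \<in> U \<Longrightarrow> \<Psi> e e' + \<Psi> u u \<le> \<Psi> e u + \<Psi> u e'"
    and "u \<in> U \<Longrightarrow> u' \<in> U \<Longrightarrow> \<Psi> u u + \<Psi> u' u' \<le> \<Psi> u u' + \<Psi> u' u"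
proof -
  have exchange: "\<Psi> x y + \<Psi> x' y' \<le> \<Psi> x y' + \<Psi> x' y"
    if "x \<in> G1 \<union> U" "x' \<in> U" "y \<in> G2 \<union> U" "y' \<in> U" "w x \<le> w x'" "w y \<le> w y'" "x \<noteq> x'" "y \<noteq> y'"
    for x x' y y'
    unfolding \<Psi>_def using that disj by (intro first_elements_submodular[OF f]) auto
  show "\<Psi> e e' + \<Psi> u u \<le> \<Psi> e u + \<Psi> u e'" if "e \<in> G1" "e' \<in> G2" "u \<in> U"
    using that disj weightless weight_nonneg by (intro exchange) auto
  show "\<Psi> u u + \<Psi> u' u' \<le> \<Psi> u u' + \<Psi> u' u" if "u \<in> U" "u' \<in> U"
  proof (cases "u = u'")
    case False
    then consider "w u \<le> w u'" | "w u' \<le> w u" by linarith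
    then show ?thesis
      by cases (use that False exchange[of u u' u u'] exchange[of u' u u' u] in auto)
  qed simp
qed

theorem joint_order_le_independent_orders:
  assumes "finite G1" "finite G2" "finite U"
    and "G1 \<inter> G2 = {}" "G1 \<inter> U = {}" "G2 \<inter> U = {}"
    and "\<forall>x\<in>G1 \<union> G2. w x = 0" and "submodular_sum f"
  shows "perm_avg (G1 \<union> G2 \<union> U) (\<lambda>\<pi>. f (total_share s G1 \<pi> + total_share s G2 \<pi>))
       \<le> perm_avg (G1 \<union> U) (\<lambda>\<pi>. perm_avg (G2 \<union> U) (\<lambda>\<rho>. f (total_share s G1 \<pi> + total_share s G2 \<rho>)))"
  using assms
proof (induction "card (G1 \<union> G2 \<union> U)" arbitrary: G1 G2 U s f rule: less_induct)
  case less
  note fin = less.prems(1-3) and disj = less.prems(4-6)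
    and weightless = less.prems(7) and f = less.prems(8)
  show ?case
  proof (cases "G1 = {} \<or> G2 = {}")
    case True
    then show ?thesis using fin by (auto simp: perm_avg_const)
  next
    case False
    define V where "V = G1 \<union> G2 \<union> U"
    define H where "H = (\<lambda>\<pi> \<rho>. f (total_share s G1 \<pi> + total_share s G2 \<rho>))"
    define \<Psi> where "\<Psi> = (\<lambda>x y. perm_avg (G1 \<union> U - {x}) (\<lambda>\<pi>. perm_avg (G2 \<union> U - {y})
                          (\<lambda>\<rho>. f (total_share s G1 (x # \<pi>) + total_share s G2 (y # \<rho>)))))"
    have fin_V: "finite V" using fin by (simp add: V_def)
    have smaller: "card (V - {x}) < card (G1 \<union> G2 \<union> U)" if "x \<in> V" for x
      using card_Diff1_less[OF fin_V that] by (simp add: V_def)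
    \<comment> \<open>A weightless first agent \<open>x\<close> of \<open>G1\<close> or \<open>G2\<close> only adds the constant \<open>g x s\<close>, and a first
      agent \<open>u\<close> of \<open>U\<close> only raises the offset to \<open>s + w u\<close>; either way the induction hypothesis applies.\<close>
    have first_in_G1: "perm_avg (V - {x}) (\<lambda>\<pi>. H (x # \<pi>) (x # \<pi>))
                       \<le> (\<Sum>y\<in>G2 \<union> U. \<Psi> x y) / real (card (G2 \<union> U))" if "x \<in> G1" for x
    proof -
      have x: "x \<notin> G2" "x \<notin> U" "w x = 0" using that disj weightless by auto
      have V_x: "V - {x} = (G1 - {x}) \<union> G2 \<union> U" using x by (auto simp: V_def)
      have "perm_avg (V - {x}) (\<lambda>\<pi>. H (x # \<pi>) (x # \<pi>)) = perm_avg ((G1 - {x}) \<union> G2 \<union> U)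
              (\<lambda>\<pi>. (\<lambda>t. f (g x s + t)) (total_share s (G1 - {x}) \<pi> + total_share s G2 \<pi>))"
        unfolding V_x H_def using fin that x
        by (simp add: total_share_Cons_weightless total_share_Cons_notin add.assoc)
      also have "\<dots> \<le> perm_avg ((G1 - {x}) \<union> U) (\<lambda>\<pi>. perm_avg (G2 \<union> U)
              (\<lambda>\<rho>. (\<lambda>t. f (g x s + t)) (total_share s (G1 - {x}) \<pi> + total_share s G2 \<rho>)))"
        by (rule less.hyps)
          (use smaller[of x] that fin disj weightless submodular_sum_shift[OF f] in \<open>auto simp: V_def V_x[symmetric]\<close>)
      also have "\<dots> = perm_avg (G1 \<union> U - {x}) (\<lambda>\<pi>. perm_avg (G2 \<union> U) (\<lambda>\<rho>. H (x # \<pi>) \<rho>))"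
        unfolding H_def using fin that x by (simp add: total_share_Cons_weightless add.assoc Un_Diff)
      also have "\<dots> = (\<Sum>y\<in>G2 \<union> U. \<Psi> x y) / real (card (G2 \<union> U))"
        unfolding \<Psi>_def H_def using fin False by (subst perm_avg_first_inner) auto
      finally show ?thesis .
    qed
    have first_in_G2: "perm_avg (V - {y}) (\<lambda>\<pi>. H (y # \<pi>) (y # \<pi>))
                       \<le> (\<Sum>x\<in>G1 \<union> U. \<Psi> x y) / real (card (G1 \<union> U))" if "y \<in> G2" for y
    proof -
      have y: "y \<notin> G1" "y \<notin> U" "w y = 0" using that disj weightless by auto
      have V_y: "V - {y} = G1 \<union> (G2 - {y}) \<union> U" using y by (auto simp: V_def)
      have "perm_avg (V - {y}) (\<lambda>\<pi>. H (y # \<pi>) (y # \<pi>)) = perm_avg (G1 \<union> (G2 - {y}) \<union> U)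
              (\<lambda>\<pi>. (\<lambda>t. f (g y s + t)) (total_share s G1 \<pi> + total_share s (G2 - {y}) \<pi>))"
        unfolding V_y H_def using fin that y
        by (simp add: total_share_Cons_weightless total_share_Cons_notin algebra_simps)
      also have "\<dots> \<le> perm_avg (G1 \<union> U) (\<lambda>\<pi>. perm_avg ((G2 - {y}) \<union> U)
              (\<lambda>\<rho>. (\<lambda>t. f (g y s + t)) (total_share s G1 \<pi> + total_share s (G2 - {y}) \<rho>)))"
        by (rule less.hyps)
          (use smaller[of y] that fin disj weightless submodular_sum_shift[OF f] in \<open>auto simp: V_def V_y[symmetric]\<close>)
      also have "\<dots> = perm_avg (G1 \<union> U) (\<lambda>\<pi>. perm_avg (G2 \<union> U - {y}) (\<lambda>\<rho>. H \<pi> (y # \<rho>)))"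
        unfolding H_def using fin that y by (simp add: total_share_Cons_weightless algebra_simps Un_Diff)
      also have "\<dots> = (\<Sum>x\<in>G1 \<union> U. \<Psi> x y) / real (card (G1 \<union> U))"
        unfolding \<Psi>_def H_def using fin False by (subst perm_avg_first) auto
      finally show ?thesis .
    qed
    have first_in_U: "perm_avg (V - {u}) (\<lambda>\<pi>. H (u # \<pi>) (u # \<pi>)) \<le> \<Psi> u u" if "u \<in> U" for u
    proof -
      have u: "u \<notin> G1" "u \<notin> G2" using that disj by auto
      have V_u: "V - {u} = G1 \<union> G2 \<union> (U - {u})" using u by (auto simp: V_def)
      have "perm_avg (V - {u}) (\<lambda>\<pi>. H (u # \<pi>) (u # \<pi>)) = perm_avg (G1 \<union> G2 \<union> (U - {u}))
              (\<lambda>\<pi>. f (total_share (s + w u) G1 \<pi> + total_share (s + w u) G2 \<pi>))"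
        unfolding V_u H_def using u by (simp add: total_share_Cons_notin)
      also have "\<dots> \<le> perm_avg (G1 \<union> (U - {u})) (\<lambda>\<pi>. perm_avg (G2 \<union> (U - {u}))
              (\<lambda>\<rho>. f (total_share (s + w u) G1 \<pi> + total_share (s + w u) G2 \<rho>)))"
        by (rule less.hyps) (use smaller[of u] that fin disj weightless f in \<open>auto simp: V_def V_u[symmetric]\<close>)
      also have "\<dots> = \<Psi> u u"
        unfolding \<Psi>_def using u by (simp add: total_share_Cons_notin Un_Diff)
      finally show ?thesis .
    qed
    have mixed: "\<Psi> e e' + \<Psi> u u \<le> \<Psi> e u + \<Psi> u e'" if "e \<in> G1" "e' \<in> G2" "u \<in> U" for e e' u
      unfolding \<Psi>_def using that by (rule first_elements_exchange(1)[OF f disj(2,3) weightless])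
    have diag: "\<Psi> u u + \<Psi> u' u' \<le> \<Psi> u u' + \<Psi> u' u" if "u \<in> U" "u' \<in> U" for u u'
      unfolding \<Psi>_def using that by (rule first_elements_exchange(2)[OF f disj(2,3) weightless])
    have "perm_avg V (\<lambda>\<pi>. H \<pi> \<pi>) = (\<Sum>x\<in>V. perm_avg (V - {x}) (\<lambda>\<pi>. H (x # \<pi>) (x # \<pi>))) / real (card V)"
      using fin_V False by (subst perm_avg_first) (auto simp: V_def)
    also have "\<dots> \<le> ((\<Sum>x\<in>G1. (\<Sum>y\<in>G2 \<union> U. \<Psi> x y) / real (card (G2 \<union> U)))
        + (\<Sum>y\<in>G2. (\<Sum>x\<in>G1 \<union> U. \<Psi> x y) / real (card (G1 \<union> U))) + (\<Sum>u\<in>U. \<Psi> u u)) / real (card V)"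
    proof (rule divide_right_mono)
      have "(\<Sum>x\<in>V. F x) = (\<Sum>x\<in>G1. F x) + (\<Sum>x\<in>G2. F x) + (\<Sum>x\<in>U. F x)" for F :: "'a \<Rightarrow> real"
        unfolding V_def using fin disj by (simp add: sum.union_disjoint Int_Un_distrib2)
      then show "(\<Sum>x\<in>V. perm_avg (V - {x}) (\<lambda>\<pi>. H (x # \<pi>) (x # \<pi>))) \<le> (\<Sum>x\<in>G1. (\<Sum>y\<in>G2 \<union> U. \<Psi> x y) / real (card (G2 \<union> U)))
        + (\<Sum>y\<in>G2. (\<Sum>x\<in>G1 \<union> U. \<Psi> x y) / real (card (G1 \<union> U))) + (\<Sum>u\<in>U. \<Psi> u u)"
        by (simp only:) (intro add_mono sum_mono first_in_G1 first_in_G2 first_in_U)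
    qed simp
    also have "\<dots> \<le> real (card V) / (real (card (G1 \<union> U)) * real (card (G2 \<union> U)))
        * (\<Sum>x\<in>G1 \<union> U. \<Sum>y\<in>G2 \<union> U. \<Psi> x y) / real (card V)"
      using False unfolding V_def
      by (intro divide_right_mono first_element_average_le[where \<Psi>=\<Psi>, OF fin disj _ _ mixed diag]) auto
    also have "\<dots> = (\<Sum>x\<in>G1 \<union> U. \<Sum>y\<in>G2 \<union> U. \<Psi> x y) / (real (card (G1 \<union> U)) * real (card (G2 \<union> U)))"
      using fin_V False by (simp add: V_def)
    also have "\<dots> = perm_avg (G1 \<union> U) (\<lambda>\<pi>. perm_avg (G2 \<union> U) (H \<pi>))"
      unfolding \<Psi>_def H_def using fin False
      by (subst perm_avg_first, simp_all, subst perm_avg_first_inner)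
         (auto simp: sum_divide_distrib[symmetric])
    finally show ?thesis unfolding V_def H_def .
  qed
qed

end

section \<open>The allocation procedures\<close>

definition demand :: "('a \<Rightarrow> real) \<Rightarrow> ('a \<Rightarrow> real) \<Rightarrow> real \<Rightarrow> 'a \<Rightarrow> real" where
  "demand v b p i = (if p \<le> v i then b i / p else 0)"

definition restricted_demand :: "('a \<Rightarrow> real) \<Rightarrow> ('a \<Rightarrow> real) \<Rightarrow> real \<Rightarrow> 'a set \<Rightarrow> 'a \<Rightarrow> real" where
  "restricted_demand v b p U i = (if i \<in> U then demand v b p i else 0)"

definition greedy_share :: "('a \<Rightarrow> real) \<Rightarrow> real \<Rightarrow> 'a \<Rightarrow> real \<Rightarrow> real" where
  "greedy_share d k i y = min (d i) (max 0 (k - y))"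

lemma demand_nonneg: "p > 0 \<Longrightarrow> \<forall>x. 0 \<le> b x \<Longrightarrow> 0 \<le> demand v b p i"
  by (simp add: demand_def)

lemma restricted_demand_nonneg: "p > 0 \<Longrightarrow> \<forall>x. 0 \<le> b x \<Longrightarrow> 0 \<le> restricted_demand v b p U i"
  by (simp add: restricted_demand_def demand_nonneg)

lemma antitone_shares_greedy_share: "(\<And>x. 0 \<le> w x) \<Longrightarrow> antitone_shares w (greedy_share d k)"
  by unfold_locales (auto simp: greedy_share_def)

lemma div_alloc_list_notin: "i \<notin> set \<pi> \<Longrightarrow> div_alloc_list v b p kr \<pi> i = 0"
  by (induction \<pi> arbitrary: kr) (auto simp: Let_def)

lemma div_alloc_list_nonneg:
  "p > 0 \<Longrightarrow> \<forall>x. 0 \<le> b x \<Longrightarrow> kr \<ge> 0 \<Longrightarrow> 0 \<le> div_alloc_list v b p kr \<pi> i"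
  by (induction \<pi> arbitrary: kr) (auto simp: Let_def)

lemma sum_div_alloc_list_le:
  assumes "p > 0" "\<forall>x. 0 \<le> b x" "kr \<ge> 0" "distinct \<pi>"
  shows "(\<Sum>i\<in>set \<pi>. div_alloc_list v b p kr \<pi> i) \<le> kr"
  using assms(3,4)
proof (induction \<pi> arbitrary: kr)
  case Nil
  then show ?case by simp
next
  case (Cons x xs)
  show ?case
  proof (cases "p \<le> v x")
    case True
    define xi where "xi = min (b x / p) kr"
    have "(\<Sum>i\<in>set (x # xs). div_alloc_list v b p kr (x # xs) i)
        = xi + (\<Sum>i\<in>set xs. ((div_alloc_list v b p (kr - xi) xs)(x := xi)) i)"
      using True Cons.prems by (simp add: Let_def xi_def)
    also have "(\<Sum>i\<in>set xs. ((div_alloc_list v b p (kr - xi) xs)(x := xi)) i)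
        = (\<Sum>i\<in>set xs. div_alloc_list v b p (kr - xi) xs i)"
      using Cons.prems by (intro sum.cong) auto
    finally have "(\<Sum>i\<in>set (x # xs). div_alloc_list v b p kr (x # xs) i)
        = xi + (\<Sum>i\<in>set xs. div_alloc_list v b p (kr - xi) xs i)" .
    moreover have "(\<Sum>i\<in>set xs. div_alloc_list v b p (kr - xi) xs i) \<le> kr - xi"
      using Cons.prems by (intro Cons.IH) (auto simp: xi_def)
    ultimately show ?thesis by simp
  next
    case False
    then show ?thesis
      using Cons div_alloc_list_notin[of x xs] by (simp add: sum.insert)
  qed
qed

lemma div_alloc_list_eq_greedy_share:
  assumes p: "p > 0" and b: "\<forall>x. 0 \<le> b x"
  shows "kr \<ge> 0 \<Longrightarrow> distinct \<pi> \<Longrightarrow> i \<in> set \<pi> \<Longrightarrow>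
    div_alloc_list v b p kr \<pi> i = greedy_share (demand v b p) kr i (weight_before (demand v b p) \<pi> i)"
proof (induction \<pi> arbitrary: kr)
  case Nil
  then show ?case by simp
next
  case (Cons x xs)
  let ?d = "demand v b p"
  show ?case
  proof (cases "x = i")
    case True
    then have "i \<notin> set xs" using Cons.prems(2) by simp
    then show ?thesis
      unfolding True using Cons.prems(1)
      by (simp add: Let_def, simp add: greedy_share_def demand_def div_alloc_list_notin)
  next
    case x_ne_i: False
    then have i: "i \<in> set xs" "distinct xs" using Cons.prems by auto
    have wb: "weight_before ?d (x # xs) i = ?d x + weight_before ?d xs i"
      using x_ne_i by simp
    show ?thesis
    proof (cases "p \<le> v x")
      case True
      define kr' where "kr' = kr - min (?d x) kr"
      have "div_alloc_list v b p kr (x # xs) i = div_alloc_list v b p kr' xs i"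
        using True x_ne_i by (simp add: Let_def kr'_def demand_def)
      also have "\<dots> = greedy_share ?d kr' i (weight_before ?d xs i)"
        using i by (intro Cons.IH) (auto simp: kr'_def)
      also have "\<dots> = greedy_share ?d kr i (weight_before ?d (x # xs) i)"
      proof -
        have "0 \<le> ?d x" "0 \<le> weight_before ?d xs i"
          using demand_nonneg[OF p b] by (blast, intro weight_before_nonneg)
        then have "max 0 (kr' - weight_before ?d xs i) = max 0 (kr - (?d x + weight_before ?d xs i))"
          using Cons.prems(1) by (auto simp: kr'_def min_def max_def)
        then show ?thesis unfolding wb greedy_share_def by simp
      qed
      finally show ?thesis .
    next
      case False
      then have "?d x = 0" by (simp add: demand_def)
      then show ?thesis
        using False x_ne_i Cons.IH[of kr] Cons.prems(1) i wb by simp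
    qed
  qed
qed

lemma finite_set_pmf_Div_Alloc: "finite S \<Longrightarrow> finite (set_pmf (Div_Alloc v b S p k))"
  by (simp add: Div_Alloc_def)

lemma finite_set_pmf_modif_run: "finite U \<Longrightarrow> finite (set_pmf (modif_run v b p k U m L))"
proof (induction L arbitrary: m)
  case (Cons i js)
  then show ?case
    using finite_set_pmf_Div_Alloc[of "insert i U" v b p k] by (auto simp: Let_def)
qed simp

lemma expectation_add_const:
  fixes M :: "real pmf"
  assumes "finite (set_pmf M)"
  shows "measure_pmf.expectation M ((+) c) = c + measure_pmf.expectation M (\<lambda>r. r)"
proof -
  have "integrable M (\<lambda>r. r)" "integrable M (\<lambda>_. c)"
    by (rule integrable_measure_pmf_finite[OF assms])+
  from Bochner_Integration.integral_add[OF this(2,1)] show ?thesis by simp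
qed

lemma expectation_modif_run_Cons:
  assumes "finite U"
  shows "measure_pmf.expectation (modif_run v b p k U m (i # js)) (\<lambda>r. r)
     = perm_avg (insert i U) (\<lambda>\<pi>. let xi = min (div_alloc_list v b p k \<pi> i) m in
         p * xi + measure_pmf.expectation (modif_run v b p k U (m - xi) js) (\<lambda>r. r))"
proof -
  let ?P = "permutations_of_set (insert i U)"
  define R where "R = (\<lambda>\<pi>. let xi = min (div_alloc_list v b p k \<pi> i) m in
                          map_pmf ((+) (p * xi)) (modif_run v b p k U (m - xi) js))"
  have "modif_run v b p k U m (i # js) = pmf_of_set ?P \<bind> R"
    by (simp add: Div_Alloc_def bind_map_pmf R_def)
  moreover have "measure_pmf.expectation (pmf_of_set ?P \<bind> R) (\<lambda>r. r)
      = (\<Sum>\<pi>\<in>?P. measure_pmf.expectation (R \<pi>) (\<lambda>r. r) /\<^sub>R real (card ?P))"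
    using assms finite_set_pmf_modif_run[OF assms]
    by (intro pmf_expectation_bind_pmf_of_set) (auto simp: R_def Let_def)
  moreover have "measure_pmf.expectation (R \<pi>) (\<lambda>r. r) = (let xi = min (div_alloc_list v b p k \<pi> i) m in
         p * xi + measure_pmf.expectation (modif_run v b p k U (m - xi) js) (\<lambda>r. r))" for \<pi>
    unfolding R_def Let_def by (simp add: expectation_add_const finite_set_pmf_modif_run[OF assms])
  ultimately show ?thesis
    by (simp add: perm_avg_def sum_distrib_left divide_inverse_commute)
qed

lemma min_supply_split: "(r :: real) \<ge> 0 \<Longrightarrow> min x m + min (m - min x m) r = min m (x + r)"
  by (auto simp: min_def)

lemma div_alloc_list_eq_total_share:
  assumes p: "p > 0" and b: "\<forall>x. 0 \<le> b x" and k: "k \<ge> 0"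
    and \<pi>: "\<pi> \<in> permutations_of_set (insert i U)"
  shows "div_alloc_list v b p k \<pi> i = antitone_shares.total_share (restricted_demand v b p U)
                                        (greedy_share (demand v b p) k) 0 {i} \<pi>"
proof -
  interpret antitone_shares "restricted_demand v b p U" "greedy_share (demand v b p) k"
    by (intro antitone_shares_greedy_share restricted_demand_nonneg[OF p b])
  have \<pi>: "distinct \<pi>" "set \<pi> = insert i U" using \<pi> by (auto simp: permutations_of_set_def)
  have "weight_before (demand v b p) \<pi> i = weight_before (restricted_demand v b p U) \<pi> i"
    using \<pi> by (intro weight_before_cong) (auto simp: restricted_demand_def)
  then show ?thesis
    using div_alloc_list_eq_greedy_share[OF p b k \<pi>(1), of i v] \<pi>(2)
    by (simp add: total_share_def)
qed

text \<open>The agents of \<open>L\<close> carry no weight: in Sell_Modif each of them competes only with \<open>U\<close>.\<close>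

lemma expectation_modif_run_ge:
  assumes p: "p > 0" and b: "\<forall>x. 0 \<le> b x" and k: "k \<ge> 0" and U: "finite U"
    and L: "distinct L" "set L \<inter> U = {}"
  shows "p * perm_avg (set L \<union> U) (\<lambda>\<pi>. min m (antitone_shares.total_share (restricted_demand v b p U)
                                           (greedy_share (demand v b p) k) 0 (set L) \<pi>))
      \<le> measure_pmf.expectation (modif_run v b p k U m L) (\<lambda>r. r)"
proof -
  interpret antitone_shares "restricted_demand v b p U" "greedy_share (demand v b p) k"
    by (intro antitone_shares_greedy_share restricted_demand_nonneg[OF p b])
  show ?thesis
    using L
  proof (induction L arbitrary: m)
    case Nil
    have "p * min m 0 \<le> 0" using p by (simp add: min_def mult_nonneg_nonpos)
    then show ?case using U by (simp add: perm_avg_const)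
  next
    case (Cons i js)
    define B where "B = set js \<union> U"
    define X where "X = (\<lambda>\<pi>. div_alloc_list v b p k \<pi> i)"
    have i: "i \<notin> U" "i \<notin> set js" "set js \<inter> U = {}" "distinct js" using Cons.prems by auto
    have share_nonneg: "0 \<le> total_share 0 G \<rho>" for G \<rho>
      unfolding total_share_def greedy_share_def using demand_nonneg[OF p b] by (intro sum_nonneg) simp
    have "p * perm_avg (set (i # js) \<union> U) (\<lambda>\<pi>. min m (total_share 0 (set (i # js)) \<pi>))
        = p * perm_avg ({i} \<union> set js \<union> U) (\<lambda>\<pi>. min m (total_share 0 {i} \<pi> + total_share 0 (set js) \<pi>))"
      using i by (simp add: total_share_Un[symmetric])
    also have "\<dots> \<le> p * perm_avg (insert i U)
        (\<lambda>\<pi>. perm_avg B (\<lambda>\<rho>. min m (total_share 0 {i} \<pi> + total_share 0 (set js) \<rho>)))"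
    proof -
      have "\<forall>x\<in>{i} \<union> set js. restricted_demand v b p U x = 0"
        using i by (auto simp: restricted_demand_def)
      from joint_order_le_independent_orders[OF _ _ U _ _ _ this submodular_sum_min]
      show ?thesis using p i by (intro mult_left_mono) (auto simp: B_def)
    qed
    also have "\<dots> = p * perm_avg (insert i U) (\<lambda>\<pi>. min (X \<pi>) m
        + perm_avg B (\<lambda>\<rho>. min (m - min (X \<pi>) m) (total_share 0 (set js) \<rho>)))"
      using U share_nonneg
      by (intro arg_cong[where f="(*) p"] perm_avg_cong)
         (simp add: B_def X_def perm_avg_add_const[symmetric] min_supply_split
                    div_alloc_list_eq_total_share[OF p b k])
    also have "\<dots> \<le> perm_avg (insert i U) (\<lambda>\<pi>. let xi = min (X \<pi>) m in
                     p * xi + measure_pmf.expectation (modif_run v b p k U (m - xi) js) (\<lambda>r. r))"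
      unfolding Let_def B_def perm_avg_mult_left[of "insert i U", symmetric] distrib_left
      using Cons.IH i by (intro perm_avg_mono add_left_mono) auto
    also have "\<dots> = measure_pmf.expectation (modif_run v b p k U m (i # js)) (\<lambda>r. r)"
      unfolding X_def by (rule expectation_modif_run_Cons[OF U, symmetric])
    finally show ?case .
  qed
qed

section \<open>Expected revenues\<close>

lemma expectation_Sell_Div:
  assumes "finite S"
  shows "measure_pmf.expectation (Sell_Div_rev v b S p k) (\<lambda>r. r)
       = (\<Sum>i\<in>S. p * perm_avg S (\<lambda>\<pi>. div_alloc_list v b p k \<pi> i))"
  using assms
  by (simp add: Sell_Div_rev_def Div_Alloc_def expectation_pmf_of_set_permutations
      perm_avg_sum perm_avg_mult_left sum_distrib_left)

lemma expectation_Sell_Modif: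
  assumes "finite S"
  shows "measure_pmf.expectation (Sell_Modif_rev v b ord S p k z) (\<lambda>r. r)
       = measure_pmf.expectation (Pi_pmf S False (\<lambda>_. bernoulli_pmf z))
           (\<lambda>f. measure_pmf.expectation (modif_run v b p k {i \<in> S. \<not> f i} k (ord {i \<in> S. f i})) (\<lambda>r. r))"
proof -
  let ?M = "Pi_pmf S False (\<lambda>_. bernoulli_pmf z)"
  let ?F = "\<lambda>f. modif_run v b p k {i \<in> S. \<not> f i} k (ord {i \<in> S. f i})"
  have fin: "finite (set_pmf ?M)"
    using assms by (simp add: set_Pi_pmf finite_PiE_dflt)
  have "measure_pmf.expectation (Sell_Modif_rev v b ord S p k z) (\<lambda>r. r)
      = (\<Sum>f\<in>set_pmf ?M. pmf ?M f *\<^sub>R measure_pmf.expectation (?F f) (\<lambda>r. r))"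
    unfolding Sell_Modif_rev_def Let_def
    by (rule pmf_expectation_bind[OF fin]) (auto simp: assms finite_set_pmf_modif_run)
  also have "\<dots> = measure_pmf.expectation ?M (\<lambda>f. measure_pmf.expectation (?F f) (\<lambda>r. r))"
    by (rule integral_measure_pmf[OF fin, symmetric]) auto
  finally show ?thesis .
qed

lemma expectation_Pi_bernoulli_sum:
  assumes "finite S" "0 \<le> z" "z \<le> 1"
  shows "measure_pmf.expectation (Pi_pmf S False (\<lambda>_. bernoulli_pmf z)) (\<lambda>f. \<Sum>i\<in>S. if f i then c i else 0)
       = z * (\<Sum>i\<in>S. c i)"
proof -
  let ?M = "Pi_pmf S False (\<lambda>_. bernoulli_pmf z)"
  have component: "measure_pmf.expectation ?M (\<lambda>f. if f i then c i else 0) = z * c i" if "i \<in> S" for i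
  proof -
    have "measure_pmf.expectation ?M (\<lambda>f. if f i then c i else 0)
        = measure_pmf.expectation (map_pmf (\<lambda>f. f i) ?M) (\<lambda>x. if x then c i else 0)"
      by simp
    also have "map_pmf (\<lambda>f. f i) ?M = bernoulli_pmf z"
      using Pi_pmf_component[OF assms(1), of i False "\<lambda>_. bernoulli_pmf z"] that by simp
    finally show ?thesis using assms(2,3) by simp
  qed
  have "finite (set_pmf ?M)"
    using assms by (simp add: set_Pi_pmf finite_PiE_dflt)
  then show ?thesis
    by (simp add: Bochner_Integration.integral_sum integrable_measure_pmf_finite component sum_distrib_left)
qed

lemma sum_share_le_expectation_modif_run:
  assumes S: "finite S" and p: "p > 0" and b: "\<forall>x. 0 \<le> b x" and k: "k \<ge> 0"
    and T: "T \<subseteq> S" "set (ord T) = T" "distinct (ord T)"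
  shows "(\<Sum>i\<in>T. p * perm_avg S (\<lambda>\<pi>. div_alloc_list v b p k \<pi> i))
       \<le> measure_pmf.expectation (modif_run v b p k (S - T) k (ord T)) (\<lambda>r. r)"
proof -
  let ?d = "demand v b p" and ?w = "restricted_demand v b p (S - T)"
  interpret antitone_shares ?w "greedy_share ?d k"
    by (intro antitone_shares_greedy_share restricted_demand_nonneg[OF p b])
  have pointwise: "(\<Sum>i\<in>T. div_alloc_list v b p k \<pi> i) \<le> min k (total_share 0 T \<pi>)"
    if "\<pi> \<in> permutations_of_set S" for \<pi>
  proof -
    have \<pi>: "distinct \<pi>" "set \<pi> = S" using that by (auto simp: permutations_of_set_def)
    have "(\<Sum>i\<in>T. div_alloc_list v b p k \<pi> i) \<le> (\<Sum>i\<in>S. div_alloc_list v b p k \<pi> i)"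
      using S T(1) div_alloc_list_nonneg[OF p b k] by (intro sum_mono2) auto
    also have "\<dots> \<le> k"
      using sum_div_alloc_list_le[OF p b k \<pi>(1)] \<pi>(2) by simp
    finally have "(\<Sum>i\<in>T. div_alloc_list v b p k \<pi> i) \<le> k" .
    moreover have "(\<Sum>i\<in>T. div_alloc_list v b p k \<pi> i) \<le> total_share 0 T \<pi>"
      unfolding total_share_def
    proof (rule sum_mono)
      fix i assume "i \<in> T"
      then have "div_alloc_list v b p k \<pi> i = greedy_share ?d k i (weight_before ?d \<pi> i)"
        using div_alloc_list_eq_greedy_share[OF p b k \<pi>(1)] \<pi>(2) T(1) by auto
      also have "\<dots> \<le> greedy_share ?d k i (0 + weight_before ?w \<pi> i)"
        using weight_before_mono[of ?w ?d] demand_nonneg[OF p b]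
        by (intro share_antitone) (auto simp: restricted_demand_def)
      finally show "div_alloc_list v b p k \<pi> i \<le> greedy_share ?d k i (0 + weight_before ?w \<pi> i)" .
    qed
    ultimately show ?thesis by simp
  qed
  have "(\<Sum>i\<in>T. p * perm_avg S (\<lambda>\<pi>. div_alloc_list v b p k \<pi> i))
      = p * perm_avg S (\<lambda>\<pi>. \<Sum>i\<in>T. div_alloc_list v b p k \<pi> i)"
    by (simp add: perm_avg_sum sum_distrib_left)
  also have "\<dots> \<le> p * perm_avg S (\<lambda>\<pi>. min k (total_share 0 T \<pi>))"
    using p pointwise by (intro mult_left_mono perm_avg_mono) auto
  also have "\<dots> = p * perm_avg (set (ord T) \<union> (S - T)) (\<lambda>\<pi>. min k (total_share 0 (set (ord T)) \<pi>))"
    using T by (simp add: Un_absorb1)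
  also have "\<dots> \<le> measure_pmf.expectation (modif_run v b p k (S - T) k (ord T)) (\<lambda>r. r)"
    using S T by (intro expectation_modif_run_ge[OF p b k]) auto
  finally show ?thesis .
qed

theorem lemma3:
  fixes v b :: "'a \<Rightarrow> real" and ord :: "'a set \<Rightarrow> 'a list"
    and S :: "'a set" and p k z :: real
  assumes "finite S"
    and "\<forall>i. v i \<ge> 0" and "\<forall>i. b i \<ge> 0"
    and "p > 0" and "k \<ge> 0" and "0 \<le> z" and "z \<le> 1"
    and "\<forall>T. T \<subseteq> S \<longrightarrow> set (ord T) = T \<and> distinct (ord T)"
  shows "measure_pmf.expectation (Sell_Modif_rev v b ord S p k z) (\<lambda>r. r)
           \<ge> z * measure_pmf.expectation (Sell_Div_rev v b S p k) (\<lambda>r. r)"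
proof -
  note S = assms(1) and b = assms(3) and p = assms(4) and k = assms(5) and ord = assms(8)
  define c where "c i = p * perm_avg S (\<lambda>\<pi>. div_alloc_list v b p k \<pi> i)" for i
  define M where "M = Pi_pmf S False (\<lambda>_. bernoulli_pmf z)"
  have "finite (set_pmf M)"
    unfolding M_def using S by (simp add: set_Pi_pmf finite_PiE_dflt)
  then have "measure_pmf.expectation M (\<lambda>f. \<Sum>i\<in>S. if f i then c i else 0)
      \<le> measure_pmf.expectation M (\<lambda>f. measure_pmf.expectation
           (modif_run v b p k {i \<in> S. \<not> f i} k (ord {i \<in> S. f i})) (\<lambda>r. r))"
  proof (intro integral_mono_AE integrable_measure_pmf_finite AE_pmfI)
    fix f
    have "{i \<in> S. \<not> f i} = S - {i \<in> S. f i}" by auto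
    then show "(\<Sum>i\<in>S. if f i then c i else 0) \<le> measure_pmf.expectation
           (modif_run v b p k {i \<in> S. \<not> f i} k (ord {i \<in> S. f i})) (\<lambda>r. r)"
      using sum_share_le_expectation_modif_run[OF S p b k, of "{i \<in> S. f i}" ord v] ord S
      by (simp add: c_def sum.inter_filter[symmetric])
  qed
  then show ?thesis
    using assms(6,7) S
    by (simp add: M_def expectation_Sell_Modif expectation_Sell_Div expectation_Pi_bernoulli_sum c_def)
qed

end
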